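(* Let $A,B,C$ be an LR triple on $V$ and let $\mathcal I$ be the set of idempotent centralizers for $A,B,C$ (a subalgebra of $\mathrm{End}(V)$). (i) If $A,B,C$ is trivial (i.e. $d=0$), then $I$ is a basis of $\mathcal I$. (ii) If $A,B,C$ is nonbipartite, then $I$ is a basis of $\mathcal I$. (iii) If $A,B,C$ is bipartite and nontrivial (so $d$ is even), then $I,J$ is a basis of $\mathcal I$, where $J=\sum_{j=0}^{d/2}E_{2j}$.
   Context: Let $V$ be a vector space over a field $\mathbb F$ with $\dim V=d+1$. A decomposition of $V$ is a sequence $(V_i)_{i=0}^d$ of one-dimensional subspaces with $V=\bigoplus V_i$; $X$ lowers it if $XV_i=V_{i-1}$ ($1\le i\le d$), $XV_0=0$; raises it if $XV_i=V_{i+1}$ ($0\le i\le d-1$), $XV_d=0$. An ordered pair $X,Y$ is an LR pair if some decomposition (unique, the $(X,Y)$-decomposition) is lowered by $X$ and raised by $Y$. An LR triple is $A,B,C\in\mathrm{End}(V)$ with $A,B$; $B,C$; $C,A$ LR pairs; it is trivial if $d=0$. Let $E_i,E'_i,E''_i$ ($0\le i\le d$) be the projections onto the $i$-th components of the $(A,B)$-, $(B,C)$-, $(C,A)$-decompositions. The triple is bipartite if $\mathrm{tr}(CE_i)=\mathrm{tr}(AE'_i)=\mathrm{tr}(BE''_i)=0$ for all $i$, nonbipartite otherwise. An idempotent centralizer for $A,B,C$ is an element of $\mathrm{End}(V)$ commuting with every $E_i,E'_i,E''_i$ ($0\le i\le d$). *)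

theory Defs
  imports "HOL-Analysis.Analysis"
begin

text \<open>V is modelled as the coordinate space 'a^'n over a field 'a, so dim V = CARD('n) = d+1;
  End(V) is modelled as the matrices 'a^'n^'n acting by matrix-vector multiplication.\<close>

definition decomposition :: "('a::field ^ 'n::finite) set list \<Rightarrow> bool" where
  "decomposition Vs \<longleftrightarrow>
     length Vs = CARD('n) \<and>
     (\<forall>i < length Vs. vec.subspace (Vs ! i) \<and> vec.dim (Vs ! i) = 1) \<and>
     (\<forall>v :: 'a ^ 'n. \<exists>!us. (\<forall>i. (i < length Vs \<longrightarrow> us i \<in> Vs ! i) \<and> (i \<ge> length Vs \<longrightarrow> us i = 0))
                       \<and> v = (\<Sum>i<length Vs. us i))"

definition lowers :: "'a::field ^ 'n ^ 'n \<Rightarrow> ('a ^ 'n) set list \<Rightarrow> bool" where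
  "lowers X Vs \<longleftrightarrow>
     (\<forall>i. 1 \<le> i \<and> i < length Vs \<longrightarrow> (\<lambda>v. X *v v) ` (Vs ! i) = Vs ! (i - 1)) \<and>
     (\<lambda>v. X *v v) ` (Vs ! 0) = {0}"

definition raises :: "'a::field ^ 'n ^ 'n \<Rightarrow> ('a ^ 'n) set list \<Rightarrow> bool" where
  "raises X Vs \<longleftrightarrow>
     (\<forall>i. i + 1 < length Vs \<longrightarrow> (\<lambda>v. X *v v) ` (Vs ! i) = Vs ! (i + 1)) \<and>
     (\<lambda>v. X *v v) ` (Vs ! (length Vs - 1)) = {0}"

definition LR_pair :: "'a::field ^ 'n::finite ^ 'n \<Rightarrow> 'a ^ 'n ^ 'n \<Rightarrow> bool" where
  "LR_pair X Y \<longleftrightarrow> (\<exists>Vs. decomposition Vs \<and> lowers X Vs \<and> raises Y Vs)"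

text \<open>The (X,Y)-decomposition (unique when X,Y is an LR pair).\<close>
definition LR_decomp :: "'a::field ^ 'n::finite ^ 'n \<Rightarrow> 'a ^ 'n ^ 'n \<Rightarrow> ('a ^ 'n) set list" where
  "LR_decomp X Y = (THE Vs. decomposition Vs \<and> lowers X Vs \<and> raises Y Vs)"

definition proj :: "('a::field ^ 'n::finite) set list \<Rightarrow> nat \<Rightarrow> 'a ^ 'n ^ 'n" where
  "proj Vs i = (THE E. (\<forall>u \<in> Vs ! i. E *v u = u) \<and>
                       (\<forall>j < length Vs. j \<noteq> i \<longrightarrow> (\<forall>u \<in> Vs ! j. E *v u = 0)))"

definition LR_triple :: "'a::field ^ 'n::finite ^ 'n \<Rightarrow> 'a ^ 'n ^ 'n \<Rightarrow> 'a ^ 'n ^ 'n \<Rightarrow> bool" where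
  "LR_triple A B C \<longleftrightarrow> LR_pair A B \<and> LR_pair B C \<and> LR_pair C A"

definition bipartite :: "'a::field ^ 'n::finite ^ 'n \<Rightarrow> 'a ^ 'n ^ 'n \<Rightarrow> 'a ^ 'n ^ 'n \<Rightarrow> bool" where
  "bipartite A B C \<longleftrightarrow>
     (\<forall>i \<le> CARD('n) - 1.
        trace (C ** proj (LR_decomp A B) i) = 0 \<and>
        trace (A ** proj (LR_decomp B C) i) = 0 \<and>
        trace (B ** proj (LR_decomp C A) i) = 0)"

definition idem_centralizers :: "'a::field ^ 'n::finite ^ 'n \<Rightarrow> 'a ^ 'n ^ 'n \<Rightarrow> 'a ^ 'n ^ 'n \<Rightarrow> ('a ^ 'n ^ 'n) set" where
  "idem_centralizers A B C =
     {X. \<forall>i \<le> CARD('n) - 1.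
           X ** proj (LR_decomp A B) i = proj (LR_decomp A B) i ** X \<and>
           X ** proj (LR_decomp B C) i = proj (LR_decomp B C) i ** X \<and>
           X ** proj (LR_decomp C A) i = proj (LR_decomp C A) i ** X}"

definition mscale :: "'a::field \<Rightarrow> 'a ^ 'n ^ 'm \<Rightarrow> 'a ^ 'n ^ 'm" where
  "mscale c M = (\<chi> i j. c * M $ i $ j)"

definition is_basis_of :: "('a::field ^ 'n ^ 'm) list \<Rightarrow> ('a ^ 'n ^ 'm) set \<Rightarrow> bool" where
  "is_basis_of Ms S \<longleftrightarrow>
     S = {M. \<exists>c. M = (\<Sum>k<length Ms. mscale (c k) (Ms ! k))} \<and>
     (\<forall>c. (\<Sum>k<length Ms. mscale (c k) (Ms ! k)) = 0 \<longrightarrow> (\<forall>k<length Ms. c k = 0))"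

end

theory Submission
  imports Defs
begin

text \<open>Let \<open>v\<close> span the last (A,B)-component \<open>V\<^sub>d\<close>; it is the kernel of \<open>B\<close> and hence also the
  first (B,C)-component. So \<open>C v\<close> lies in the second (B,C)-component, \<open>B\<^sup>2 C v = 0\<close>, and
  \<open>C v = a v + b A v\<close> with \<open>a = tr (C E\<^sub>d)\<close>.

  An idempotent centralizer \<open>X\<close> acts by scalars \<open>x\<^sub>i\<close> on the (A,B)-components and \<open>y\<^sub>j\<close> on the
  (C,A)-components, and \<open>x\<^sub>i = y\<^sub>j\<close> whenever a vector of the \<open>i\<close>-th (A,B)-component has a nonzero
  \<open>j\<close>-th (C,A)-component. The (C,A)-components of \<open>v\<close> in degrees \<open>0\<close> and \<open>s\<close> are nonzero, with
  \<open>s = 1\<close> if \<open>a \<noteq> 0\<close> and \<open>s = 2\<close> if \<open>a = 0\<close>; pushing \<open>v\<close> down with \<open>A\<close>, which lowers one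
  decomposition and raises the other, shows that \<open>x\<close> is \<open>s\<close>-periodic. Hence \<open>X\<close> is a scalar if
  \<open>a \<noteq> 0\<close> and a combination of \<open>I\<close> and \<open>J\<close> if \<open>a = 0\<close>.

  If \<open>a = 0\<close>, all three decompositions are homogeneous for one parity grading, whose even part is
  the image of \<open>J\<close>. So \<open>J\<close> is a centralizer, and \<open>A\<close>, \<open>B\<close>, \<open>C\<close> are odd; an odd map has zero trace
  against every homogeneous projection, so the triple is bipartite. Conversely, bipartiteness
  gives \<open>a = tr (C E\<^sub>d) = 0\<close>.\<close>

lemma matrix_add_rdistrib: "(B + C) ** (A::'a::field^'n^'n) = B ** A + C ** A"
  by (vector matrix_matrix_mult_def sum.distrib[symmetric] field_simps)

lemma matrix_diff_rdistrib: "(B - C) ** (A::'a::field^'n^'n) = B ** A - C ** A"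
  by (vector matrix_matrix_mult_def sum_subtractf[symmetric] field_simps)

lemma matrix_vector_mult_axis: "(M *v axis j 1) $ i = (M::'a::field^'n^'m) $ i $ j"
  by (simp add: matrix_vector_mult_def axis_def if_distrib cong: if_cong)

lemma matrix_vector_mult_sum_left:
  "finite S \<Longrightarrow> (\<Sum>j\<in>S. M j) *v (u::'a::field^'n) = (\<Sum>j\<in>S. M j *v u)"
  by (induction S rule: finite_induct) (auto simp: matrix_vector_mult_add_rdistrib)

lemma mscale_matrix_vector_mult: "mscale c M *v u = c *s (M *v u)"
  by (simp add: mscale_def matrix_vector_mult_def vec_eq_iff sum_distrib_left mult.assoc)

lemma mscale_eq_mat_mult: "mscale c M = mat c ** (M::'a::field^'n^'n)"
  by (simp add: mscale_def matrix_matrix_mult_def mat_def vec_eq_iff if_distrib if_distribR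
      sum.delta cong: if_cong)

lemma mat_mult_commute: "mat c ** M = M ** (mat c :: 'a::field^'n^'n)"
  by (simp add: matrix_matrix_mult_def mat_def vec_eq_iff if_distrib if_distribR sum.delta
      mult.commute cong: if_cong)

lemma mscale_commute:
  fixes X E :: "'a::field^'n^'n"
  assumes "X ** E = E ** X"
  shows "mscale c X ** E = E ** mscale c X"
proof -
  have "mscale c X ** E = mat c ** (X ** E)" by (simp add: mscale_eq_mat_mult matrix_mul_assoc)
  also have "\<dots> = (E ** mat c) ** X" by (simp add: assms matrix_mul_assoc mat_mult_commute)
  also have "\<dots> = E ** mscale c X" by (simp only: mscale_eq_mat_mult matrix_mul_assoc)
  finally show ?thesis .
qed

lemma lin_comb_commute:
  fixes X Y E :: "'a::field^'n^'n"
  assumes "X ** E = E ** X" "Y ** E = E ** Y"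
  shows "(mscale c X + mscale d Y) ** E = E ** (mscale c X + mscale d Y)"
  using mscale_commute[OF assms(1)] mscale_commute[OF assms(2)]
  by (simp add: matrix_add_rdistrib matrix_add_ldistrib)

text \<open>The hypotheses say that \<open>M\<close> is odd and \<open>F\<close> homogeneous for the grading defined by \<open>P\<close>.\<close>
lemma trace_mult_eq_0_if_swaps:
  fixes M P F :: "'a::field^'n^'n"
  assumes MP: "M ** P = (mat 1 - P) ** M" and PF: "P ** F = F ** P"
    and F: "P ** F = F \<or> P ** F = 0"
  shows "trace (M ** F) = 0"
  using F
proof
  assume F: "P ** F = F"
  have "trace (M ** F) = trace (((mat 1 - P) ** M) ** F)"
    by (metis F MP matrix_mul_assoc)
  also have "\<dots> = trace (M ** F) - trace (P ** (M ** F))"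
    by (simp add: matrix_diff_rdistrib trace_sub matrix_mul_assoc)
  also have "trace (P ** (M ** F)) = trace ((M ** F) ** P)" by (rule trace_mul_sym)
  also have "(M ** F) ** P = M ** F" by (simp add: matrix_mul_assoc[symmetric] PF[symmetric] F)
  finally show ?thesis by simp
next
  assume F: "P ** F = 0"
  have "M ** F - P ** (M ** F) = ((mat 1 - P) ** M) ** F"
    by (simp add: matrix_diff_rdistrib matrix_mul_assoc)
  also have "\<dots> = M ** (P ** F)" by (simp add: MP[symmetric] matrix_mul_assoc)
  finally have "M ** F - P ** (M ** F) = M ** (P ** F)" .
  then have "P ** (M ** F) = M ** F" using F by simp
  then have "trace (M ** F) = trace ((M ** F) ** P)" by (metis trace_mul_sym)
  also have "(M ** F) ** P = 0" by (simp add: matrix_mul_assoc[symmetric] PF[symmetric] F)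
  finally show ?thesis by (simp add: trace_0[simplified])
qed

lemma dim_1_subspace_obtains_generator:
  fixes S :: "('a::field ^ 'n::finite) set"
  assumes "vec.subspace S" "vec.dim S = 1"
  obtains g where "g \<noteq> 0" "S = range (\<lambda>c. c *s g)"
proof -
  obtain Bs where Bs: "Bs \<subseteq> S" "vec.independent Bs" "S \<subseteq> vec.span Bs" "card Bs = vec.dim S"
    by (rule vec.basis_exists)
  then obtain g where g: "Bs = {g}" using assms(2) by (metis card_1_singletonE)
  have "g \<noteq> 0" using Bs(2) g vec.dependent_zero by blast
  moreover have "S = vec.span {g}" using Bs g assms(1) vec.span_subspace by blast
  ultimately show ?thesis using that vec.span_singleton by blast
qed

lemma is_basis_of_scalars:
  "is_basis_of [mat 1] (range (\<lambda>c. mscale c (mat 1 :: 'a::field^'n^'n)))"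
proof -
  have "mscale c (mat 1 :: 'a^'n^'n) $ i $ i = c" for c i by (simp add: mscale_def mat_def)
  then have "mscale c (mat 1 :: 'a^'n^'n) = 0 \<Longrightarrow> c = 0" for c by (metis zero_index)
  moreover have "range (\<lambda>c. mscale c (mat 1 :: 'a^'n^'n)) = {M. \<exists>c::nat\<Rightarrow>'a. M = mscale (c 0) (mat 1)}"
    by (auto intro!: exI[of _ "\<lambda>_. _"])
  ultimately show ?thesis unfolding is_basis_of_def by simp
qed

lemma is_basis_of_pair:
  fixes P :: "'a::field^'n^'n"
  assumes "S = {mscale c (mat 1) + mscale d P | c d. True}"
    and "\<And>c d. mscale c (mat 1) + mscale d P = 0 \<Longrightarrow> c = 0 \<and> d = 0"
  shows "is_basis_of [mat 1, P] S"
proof -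
  have sum2: "(\<Sum>k<length [mat 1, P]. mscale (c k) ([mat 1, P] ! k)) = mscale (c 0) (mat 1) + mscale (c 1) P"
    for c by (simp add: numeral_2_eq_2)
  have "S = {M. \<exists>c::nat\<Rightarrow>'a. M = mscale (c 0) (mat 1) + mscale (c 1) P}"
  proof (intro equalityI subsetI)
    fix M assume "M \<in> S"
    then obtain c d where "M = mscale c (mat 1) + mscale d P" using assms(1) by blast
    then show "M \<in> {M. \<exists>c::nat\<Rightarrow>'a. M = mscale (c 0) (mat 1) + mscale (c 1) P}"
      by (intro CollectI exI[of _ "\<lambda>k. if k = 0 then c else d"]) simp
  qed (use assms(1) in blast)
  moreover have "\<forall>k<length [mat 1, P]. c k = 0" if "mscale (c 0) (mat 1) + mscale (c 1) P = 0" for c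
    using assms(2)[OF that] by (auto simp: less_Suc_eq)
  ultimately show ?thesis unfolding is_basis_of_def sum2 by blast
qed

lemma idem_centralizers_card_1:
  fixes A B C :: "'a::field^'n::finite^'n"
  assumes "CARD('n) = 1"
  shows "idem_centralizers A B C = range (\<lambda>c. mscale c (mat 1))"
proof -
  obtain z :: 'n where z: "UNIV = {z}" using assms card_1_singletonE by blast
  then have all: "i = z" for i :: 'n by auto
  have "(X ** Y) $ i $ j = (Y ** X) $ i $ j" for X Y :: "'a^'n^'n" and i j
    using all[of i] all[of j] by (simp add: matrix_matrix_mult_def z mult.commute)
  then have "idem_centralizers A B C = UNIV" unfolding idem_centralizers_def by (simp add: vec_eq_iff)
  moreover have "X $ i $ j = mscale (X $ z $ z) (mat 1) $ i $ j" for X :: "'a^'n^'n" and i j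
    using all[of i] all[of j] by (simp add: mscale_def mat_def)
  then have "X = mscale (X $ z $ z) (mat 1)" for X :: "'a^'n^'n" by (simp add: vec_eq_iff)
  then have "range (\<lambda>c. mscale c (mat 1 :: 'a^'n^'n)) = UNIV" by blast
  ultimately show ?thesis by simp
qed

section \<open>Decompositions and their projections\<close>

locale decomposition_space =
  fixes Vs :: "('a::field ^ 'n::finite) set list"
  assumes decomposition: "decomposition Vs"
begin

lemma length_eq: "length Vs = CARD('n)"
  using decomposition by (simp add: decomposition_def)

lemma component_subspace: "i < CARD('n) \<Longrightarrow> vec.subspace (Vs!i)"
  using decomposition by (simp add: decomposition_def)

lemma component_obtains_generator:
  assumes "i < CARD('n)"
  obtains g where "g \<noteq> 0" "Vs!i = range (\<lambda>c. c *s g)"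
  using dim_1_subspace_obtains_generator[OF component_subspace[OF assms]] decomposition assms
  by (auto simp: decomposition_def)

lemma component_nonzero: "i < CARD('n) \<Longrightarrow> \<exists>g\<in>Vs!i. g \<noteq> 0"
  by (metis component_obtains_generator rangeI vector_smult_lid)

lemma component_multiple:
  assumes "i < CARD('n)" "g \<in> Vs!i" "g \<noteq> 0" "u \<in> Vs!i"
  shows "\<exists>c. u = c *s g"
proof -
  obtain h where h: "Vs!i = range (\<lambda>c. c *s h)" using component_obtains_generator assms(1) by blast
  obtain a b where "g = a *s h" "u = b *s h" using h assms(2,4) by auto
  moreover have "a \<noteq> 0" using \<open>g = a *s h\<close> assms(3) by auto
  ultimately have "u = (b / a) *s g" by (simp add: vector_smult_assoc)
  then show ?thesis by blast
qed

definition components :: "'a^'n \<Rightarrow> nat \<Rightarrow> 'a^'n" where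
  "components v = (THE us. (\<forall>i. (i < CARD('n) \<longrightarrow> us i \<in> Vs ! i) \<and> (i \<ge> CARD('n) \<longrightarrow> us i = 0))
                           \<and> v = (\<Sum>i<CARD('n). us i))"

lemma components_ex1:
  "\<exists>!us. (\<forall>i. (i < CARD('n) \<longrightarrow> us i \<in> Vs ! i) \<and> (i \<ge> CARD('n) \<longrightarrow> us i = 0))
         \<and> v = (\<Sum>i<CARD('n). us i)"
  using decomposition unfolding decomposition_def length_eq[symmetric] by blast

lemma components_in: "i < CARD('n) \<Longrightarrow> components v i \<in> Vs!i"
  and sum_components: "v = (\<Sum>i<CARD('n). components v i)"
  using theI'[OF components_ex1, of v] unfolding components_def[symmetric] by blast+

lemma components_unique:
  assumes "\<forall>i<CARD('n). us i \<in> Vs!i" "v = (\<Sum>i<CARD('n). us i)" "i < CARD('n)"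
  shows "components v i = us i"
proof -
  let ?w = "\<lambda>i. if i < CARD('n) then us i else 0"
  have "components v = ?w"
    unfolding components_def using assms(1,2) by (intro the1_equality[OF components_ex1]) auto
  then show ?thesis using assms by simp
qed

lemma components_linear: "i < CARD('n) \<Longrightarrow> Vector_Spaces.linear (*s) (*s) (\<lambda>v. components v i)"
proof unfold_locales
  assume i: "i < CARD('n)"
  show "components (u + w) i = components u i + components w i" for u w
    by (rule components_unique[OF _ _ i])
      (auto simp: vec.subspace_add component_subspace components_in sum.distrib sum_components[symmetric])
  show "components (c *s u) i = c *s components u i" for c u
    by (rule components_unique[OF _ _ i])
      (auto simp: vec.subspace_scale component_subspace components_in vec.scale_sum_right[symmetric]
        sum_components[symmetric])
qed

lemma components_of_component:
  assumes "j < CARD('n)" "u \<in> Vs!j" "i < CARD('n)"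
  shows "components u i = (if i = j then u else 0)"
  by (rule components_unique)
    (use assms in \<open>auto simp: vec.subspace_0 component_subspace if_distrib sum.delta\<close>)

lemma matrix_eqI_on_components:
  assumes "\<And>i u. i < CARD('n) \<Longrightarrow> u \<in> Vs!i \<Longrightarrow> M *v u = M' *v u"
  shows "M = M'"
proof -
  have "M *v v = M' *v v" for v
  proof -
    have "M *v v = (\<Sum>i<CARD('n). M *v components v i)" by (subst sum_components[of v]) (rule vec.sum)
    also have "\<dots> = (\<Sum>i<CARD('n). M' *v components v i)" using assms components_in by auto
    also have "\<dots> = M' *v v" by (subst (2) sum_components[of v]) (rule vec.sum[symmetric])
    finally show ?thesis .
  qed
  then show ?thesis by (simp add: matrix_eq)
qed

abbreviation E :: "nat \<Rightarrow> 'a^'n^'n" where "E \<equiv> proj Vs"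

lemma proj_eq_matrix_components:
  assumes i: "i < CARD('n)"
  shows "E i = matrix (\<lambda>v. components v i)"
proof -
  let ?M = "matrix (\<lambda>v. components v i) :: 'a^'n^'n"
  have M: "?M *v v = components v i" for v by (rule matrix_works[OF components_linear[OF i]])
  let ?P = "\<lambda>E::'a^'n^'n. (\<forall>u \<in> Vs ! i. E *v u = u) \<and>
                       (\<forall>j < length Vs. j \<noteq> i \<longrightarrow> (\<forall>u \<in> Vs ! j. E *v u = 0))"
  have P: "?P ?M" using i by (auto simp: M components_of_component length_eq)
  moreover have "E' = ?M" if "?P E'" for E'
    by (rule matrix_eqI_on_components) (use that P in \<open>metis length_eq\<close>)
  ultimately show ?thesis unfolding proj_def by (rule the_equality)
qed

lemma proj_apply: "i < CARD('n) \<Longrightarrow> E i *v v = components v i"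
  by (simp add: proj_eq_matrix_components matrix_works[OF components_linear])

lemma proj_in: "i < CARD('n) \<Longrightarrow> E i *v v \<in> Vs!i"
  by (simp add: proj_apply components_in)

lemma sum_proj: "v = (\<Sum>i<CARD('n). E i *v v)"
  using sum_components[of v] by (simp add: proj_apply)

lemma proj_on_component:
  "j < CARD('n) \<Longrightarrow> u \<in> Vs!j \<Longrightarrow> i < CARD('n) \<Longrightarrow> E i *v u = (if i = j then u else 0)"
  by (simp add: proj_apply components_of_component)

lemma proj_idem_on: "i < CARD('n) \<Longrightarrow> u \<in> Vs!i \<Longrightarrow> E i *v u = u"
  by (simp add: proj_on_component)

lemma vector_eq_single_component:
  assumes "j < CARD('n)" "\<And>i. i < CARD('n) \<Longrightarrow> i \<noteq> j \<Longrightarrow> E i *v u = 0"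
  shows "u = E j *v u"
proof -
  have "u = (\<Sum>i<CARD('n). E i *v u)" by (rule sum_proj)
  also have "\<dots> = (\<Sum>i\<in>{j}. E i *v u)"
    by (rule sum.mono_neutral_right) (use assms in auto)
  finally show ?thesis by simp
qed

lemma diagonal_mult_proj:
  assumes P: "\<And>i u. i < CARD('n) \<Longrightarrow> u \<in> Vs!i \<Longrightarrow> P *v u = (if Q i then u else 0)"
    and j: "j < CARD('n)"
  shows "P ** E j = (if Q j then E j else 0)" "E j ** P = (if Q j then E j else 0)"
proof -
  show "P ** E j = (if Q j then E j else 0)"
    by (rule matrix_eqI_on_components)
      (auto simp: matrix_vector_mul_assoc[symmetric] proj_on_component[OF _ _ j] P)
  show "E j ** P = (if Q j then E j else 0)"
    by (rule matrix_eqI_on_components)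
      (auto simp: matrix_vector_mul_assoc[symmetric] proj_on_component[OF _ _ j] P)
qed

lemma commuting_acts_by_scalars:
  assumes "\<And>i. i < CARD('n) \<Longrightarrow> X ** E i = E i ** X"
  obtains x where "\<And>i u. i < CARD('n) \<Longrightarrow> u \<in> Vs!i \<Longrightarrow> X *v u = x i *s u"
proof -
  have "\<exists>s. \<forall>u\<in>Vs!i. X *v u = s *s u" if i: "i < CARD('n)" for i
  proof -
    obtain g where g: "Vs!i = range (\<lambda>c. c *s g)" using component_obtains_generator i by blast
    then have "g \<in> Vs!i" by (metis rangeI vector_smult_lid)
    then have "X *v g = X *v (E i *v g)" using proj_idem_on[OF i] by simp
    also have "\<dots> = E i *v (X *v g)" by (simp add: matrix_vector_mul_assoc assms[OF i])
    finally have "X *v g = E i *v (X *v g)" .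
    then obtain s where s: "X *v g = s *s g" using proj_in[OF i, of "X *v g"] g by auto
    have "X *v (c *s g) = s *s (c *s g)" for c
      by (simp add: vector_scalar_commute s vector_smult_assoc mult.commute)
    then show "\<exists>s. \<forall>u\<in>Vs!i. X *v u = s *s u" using g by auto
  qed
  then have "\<forall>i. \<exists>s. i < CARD('n) \<longrightarrow> (\<forall>u\<in>Vs!i. X *v u = s *s u)" by blast
  from choice[OF this] obtain x where "\<forall>i. i < CARD('n) \<longrightarrow> (\<forall>u\<in>Vs!i. X *v u = x i *s u)"
    by blast
  then show ?thesis using that by blast
qed

lemma swaps_diagonal_idempotent:
  assumes P: "\<And>i u. i < CARD('n) \<Longrightarrow> u \<in> Vs!i \<Longrightarrow> P *v u = (if Q i then u else 0)"
    and M: "\<And>i u. i < CARD('n) \<Longrightarrow> u \<in> Vs!i \<Longrightarrow>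
              M *v u = 0 \<or> (\<exists>k<CARD('n). M *v u \<in> Vs!k \<and> (Q k \<longleftrightarrow> \<not> Q i))"
  shows "M ** P = (mat 1 - P) ** M"
proof (rule matrix_eqI_on_components)
  fix i u assume iu: "i < CARD('n)" "u \<in> Vs!i"
  have "(M ** P) *v u = (if Q i then M *v u else 0)"
    by (simp add: matrix_vector_mul_assoc[symmetric] P[OF iu])
  moreover have "((mat 1 - P) ** M) *v u = M *v u - P *v (M *v u)"
    by (simp add: matrix_vector_mul_assoc[symmetric] matrix_vector_mult_diff_rdistrib)
  ultimately show "(M ** P) *v u = ((mat 1 - P) ** M) *v u"
    using M[OF iu] P by auto
qed

lemma trace_proj: assumes i: "i < CARD('n)" shows "trace (E i) = 1"
proof -
  obtain g where g: "g \<in> Vs!i" "g \<noteq> 0" using component_nonzero[OF i] by blast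
  obtain k where k: "g $ k \<noteq> 0" using g(2) by (metis vec_eq_iff zero_index)
  text \<open>Every column of \<open>E i\<close> is a multiple of \<open>g\<close>, so \<open>E i\<close> is determined by its \<open>k\<close>-th row.\<close>
  have col: "E i $ t $ r = E i $ k $ r * g $ t / g $ k" for t r
  proof -
    obtain c where c: "E i *v axis r 1 = c *s g" using component_multiple[OF i g proj_in[OF i]] by blast
    have "E i $ t $ r = c * g $ t" "E i $ k $ r = c * g $ k"
      using arg_cong[OF c, of "\<lambda>x. x $ t"] arg_cong[OF c, of "\<lambda>x. x $ k"]
      by (simp_all add: matrix_vector_mult_axis)
    then show ?thesis using k by (simp add: field_simps)
  qed
  have "trace (E i) = (\<Sum>r\<in>UNIV. E i $ k $ r * g $ r / g $ k)"
    unfolding trace_def by (rule sum.cong[OF refl col])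
  also have "\<dots> = (\<Sum>r\<in>UNIV. E i $ k $ r * g $ r) / g $ k" by (simp add: sum_divide_distrib)
  also have "(\<Sum>r\<in>UNIV. E i $ k $ r * g $ r) = (E i *v g) $ k" by (simp add: matrix_vector_mult_def)
  also have "E i *v g = g" using proj_idem_on[OF i g(1)] .
  finally show ?thesis using k by simp
qed

lemma image_component_nonzero:
  assumes "i < CARD('n)" "k < CARD('n)" "(\<lambda>v. M *v v) ` (Vs!i) = Vs!k" "u \<in> Vs!i" "u \<noteq> 0"
  shows "M *v u \<noteq> 0"
proof
  assume Mu: "M *v u = 0"
  obtain g where g: "Vs!i = range (\<lambda>c. c *s g)" using component_obtains_generator assms(1) by blast
  obtain c where c: "u = c *s g" "c \<noteq> 0" using assms(4,5) g by auto
  then have "M *v g = 0" using Mu by (simp add: vector_scalar_commute)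
  then have "Vs!k \<subseteq> {0}" using assms(3) g by (auto simp: vector_scalar_commute)
  then show False using component_nonzero[OF assms(2)] by auto
qed

end

section \<open>LR pairs\<close>

locale LR_pair_decomposition = decomposition_space Vs for Vs :: "('a::field ^ 'n::finite) set list" +
  fixes X Y :: "'a^'n^'n"
  assumes lowers: "lowers X Vs" and raises: "raises Y Vs"
begin

lemma lower_image: "1 \<le> i \<Longrightarrow> i < CARD('n) \<Longrightarrow> (\<lambda>v. X *v v) ` (Vs!i) = Vs!(i-1)"
  using lowers by (simp add: lowers_def length_eq)

lemma lower_first: "u \<in> Vs!0 \<Longrightarrow> X *v u = 0"
  using lowers unfolding lowers_def by blast

lemma lower_in: "1 \<le> i \<Longrightarrow> i < CARD('n) \<Longrightarrow> u \<in> Vs!i \<Longrightarrow> X *v u \<in> Vs!(i-1)"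
  using lower_image by blast

lemma lower_nonzero: "1 \<le> i \<Longrightarrow> i < CARD('n) \<Longrightarrow> u \<in> Vs!i \<Longrightarrow> u \<noteq> 0 \<Longrightarrow> X *v u \<noteq> 0"
  by (rule image_component_nonzero[OF _ _ lower_image]) auto

lemma raise_image: "i + 1 < CARD('n) \<Longrightarrow> (\<lambda>v. Y *v v) ` (Vs!i) = Vs!(i+1)"
  using raises by (simp add: raises_def length_eq)

lemma raise_last: "u \<in> Vs!(CARD('n)-1) \<Longrightarrow> Y *v u = 0"
  using raises unfolding raises_def length_eq by blast

lemma raise_in: "i + 1 < CARD('n) \<Longrightarrow> u \<in> Vs!i \<Longrightarrow> Y *v u \<in> Vs!(i+1)"
  using raise_image by blast

lemma raise_nonzero: "i + 1 < CARD('n) \<Longrightarrow> u \<in> Vs!i \<Longrightarrow> u \<noteq> 0 \<Longrightarrow> Y *v u \<noteq> 0"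
  by (rule image_component_nonzero[OF _ _ raise_image]) auto

lemma lower_cases:
  assumes "j < CARD('n)" "u \<in> Vs!j"
  obtains "j = 0" "X *v u = 0" | "1 \<le> j" "X *v u \<in> Vs!(j-1)"
proof (cases "j = 0")
  case True
  then show ?thesis using that(1) assms lower_first by simp
next
  case False
  then show ?thesis using that(2) assms lower_in by simp
qed

lemma raise_cases:
  assumes "j < CARD('n)" "u \<in> Vs!j"
  obtains "j = CARD('n) - 1" "Y *v u = 0" | "j + 1 < CARD('n)" "Y *v u \<in> Vs!(j+1)"
proof (cases "j + 1 < CARD('n)")
  case True
  then show ?thesis using that(2) assms raise_in by simp
next
  case False
  then have "j = CARD('n) - 1" using assms(1) by simp
  then show ?thesis using that(1) assms(2) raise_last by simp
qed

lemma proj_lower: "i + 1 < CARD('n) \<Longrightarrow> E i *v (X *v u) = X *v (E (i+1) *v u)"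
  and proj_last_lower: "E (CARD('n)-1) *v (X *v u) = 0"
proof -
  assume i: "i + 1 < CARD('n)"
  have "E i ** X = X ** E (i+1)"
  proof (rule matrix_eqI_on_components)
    fix j w assume jw: "j < CARD('n)" "w \<in> Vs!j"
    note E_w = proj_on_component[OF jw, of "i+1"]
    show "(E i ** X) *v w = (X ** E (i+1)) *v w"
    proof (cases rule: lower_cases[OF jw])
      case 1
      then show ?thesis using i E_w by (simp add: matrix_vector_mul_assoc[symmetric])
    next
      case 2
      then show ?thesis using i jw E_w proj_on_component[OF _ 2(2), of i]
        by (auto simp: matrix_vector_mul_assoc[symmetric])
    qed
  qed
  then show "E i *v (X *v u) = X *v (E (i+1) *v u)" by (simp add: matrix_vector_mul_assoc)
next
  have "E (CARD('n)-1) ** X = 0"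
  proof (rule matrix_eqI_on_components)
    fix j w assume jw: "j < CARD('n)" "w \<in> Vs!j"
    show "(E (CARD('n)-1) ** X) *v w = 0 *v w"
    proof (cases rule: lower_cases[OF jw])
      case 2
      then show ?thesis using jw proj_on_component[OF _ 2(2), of "CARD('n)-1"]
        by (simp add: matrix_vector_mul_assoc[symmetric])
    qed (simp add: matrix_vector_mul_assoc[symmetric])
  qed
  then show "E (CARD('n)-1) *v (X *v u) = 0" by (simp add: matrix_vector_mul_assoc)
qed

lemma proj_raise: "i + 1 < CARD('n) \<Longrightarrow> E (i+1) *v (Y *v u) = Y *v (E i *v u)"
  and proj_first_raise: "E 0 *v (Y *v u) = 0"
proof -
  assume i: "i + 1 < CARD('n)"
  have "E (i+1) ** Y = Y ** E i"
  proof (rule matrix_eqI_on_components)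
    fix j w assume jw: "j < CARD('n)" "w \<in> Vs!j"
    note E_w = proj_on_component[OF jw, of i]
    show "(E (i+1) ** Y) *v w = (Y ** E i) *v w"
    proof (cases rule: raise_cases[OF jw])
      case 1
      then show ?thesis using i E_w by (auto simp: matrix_vector_mul_assoc[symmetric])
    next
      case 2
      then show ?thesis using i jw E_w proj_on_component[OF _ 2(2), of "i+1"]
        by (auto simp: matrix_vector_mul_assoc[symmetric])
    qed
  qed
  then show "E (i+1) *v (Y *v u) = Y *v (E i *v u)" by (simp add: matrix_vector_mul_assoc)
next
  have "E 0 ** Y = 0"
  proof (rule matrix_eqI_on_components)
    fix j w assume jw: "j < CARD('n)" "w \<in> Vs!j"
    show "(E 0 ** Y) *v w = 0 *v w"
    proof (cases rule: raise_cases[OF jw])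
      case 2
      then show ?thesis using proj_on_component[OF _ 2(2), of 0]
        by (simp add: matrix_vector_mul_assoc[symmetric])
    qed (simp add: matrix_vector_mul_assoc[symmetric])
  qed
  then show "E 0 *v (Y *v u) = 0" by (simp add: matrix_vector_mul_assoc)
qed

lemma raise_kernel: "Vs!(CARD('n)-1) = {u. Y *v u = 0}"
proof (intro equalityI subsetI)
  fix u assume "u \<in> {u. Y *v u = 0}"
  have "E i *v u = 0" if "i < CARD('n)" "i \<noteq> CARD('n) - 1" for i
  proof (rule ccontr)
    assume "E i *v u \<noteq> 0"
    then have "Y *v (E i *v u) \<noteq> 0" using raise_nonzero[OF _ proj_in] that by simp
    moreover have "i + 1 < CARD('n)" using that by simp
    ultimately show False using proj_raise[of i u] \<open>u \<in> {u. Y *v u = 0}\<close> by simp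
  qed
  then have "u = E (CARD('n)-1) *v u" by (intro vector_eq_single_component) auto
  then show "u \<in> Vs!(CARD('n)-1)" by (metis proj_in diff_less zero_less_card_finite zero_less_one)
qed (use raise_last in auto)

lemma lower_kernel: "Vs!0 = {u. X *v u = 0}"
proof (intro equalityI subsetI)
  fix u assume "u \<in> {u. X *v u = 0}"
  have "E i *v u = 0" if "i < CARD('n)" "i \<noteq> 0" for i
  proof (rule ccontr)
    assume "E i *v u \<noteq> 0"
    then have "X *v (E i *v u) \<noteq> 0" using lower_nonzero[OF _ _ proj_in] that by simp
    then show False using proj_lower[of "i-1" u] that \<open>u \<in> {u. X *v u = 0}\<close> by simp
  qed
  then have "u = E 0 *v u" by (intro vector_eq_single_component) auto
  then show "u \<in> Vs!0" by (metis proj_in zero_less_card_finite)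
qed (use lower_first in auto)

lemma raised_if_proj_first_zero:
  assumes "E 0 *v u = 0"
  obtains w where "u = Y *v w"
proof -
  have "\<exists>w. E j *v u = Y *v w" if "j < CARD('n)" for j
  proof (cases "j = 0")
    case False
    then have "E j *v u \<in> (\<lambda>v. Y *v v) ` (Vs!(j-1))"
      using raise_image[of "j-1"] proj_in[OF that] that by simp
    then show ?thesis by blast
  qed (use assms in \<open>auto intro: exI[of _ 0]\<close>)
  then have "\<forall>j. \<exists>w. j < CARD('n) \<longrightarrow> E j *v u = Y *v w" by blast
  from choice[OF this] obtain w where w: "\<And>j. j < CARD('n) \<Longrightarrow> E j *v u = Y *v w j"
    by blast
  have "u = (\<Sum>j<CARD('n). Y *v w j)" using sum_proj[of u] w by simp
  also have "\<dots> = Y *v (\<Sum>j<CARD('n). w j)" by (rule vec.sum[symmetric])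
  finally show ?thesis using that by blast
qed

lemma swaps_alternating_idempotent:
  assumes P: "\<And>i u. i < CARD('n) \<Longrightarrow> u \<in> Vs!i \<Longrightarrow> P *v u = (if Q i then u else 0)"
    and Q: "\<And>i. Q (Suc i) \<longleftrightarrow> \<not> Q i"
  shows "X ** P = (mat 1 - P) ** X" "Y ** P = (mat 1 - P) ** Y"
proof -
  show "X ** P = (mat 1 - P) ** X"
  proof (rule swaps_diagonal_idempotent[OF P])
    fix i u assume iu: "i < CARD('n)" "u \<in> Vs!i"
    show "X *v u = 0 \<or> (\<exists>k<CARD('n). X *v u \<in> Vs!k \<and> (Q k \<longleftrightarrow> \<not> Q i))"
      by (cases rule: lower_cases[OF iu]) (use iu Q[of "i - 1"] in \<open>auto intro: exI[of _ "i - 1"]\<close>)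
  qed
  show "Y ** P = (mat 1 - P) ** Y"
  proof (rule swaps_diagonal_idempotent[OF P])
    fix i u assume iu: "i < CARD('n)" "u \<in> Vs!i"
    show "Y *v u = 0 \<or> (\<exists>k<CARD('n). Y *v u \<in> Vs!k \<and> (Q k \<longleftrightarrow> \<not> Q i))"
      by (cases rule: raise_cases[OF iu]) (use Q[of i] in \<open>auto intro: exI[of _ "i + 1"]\<close>)
  qed
qed

end

text \<open>The decomposition is recovered from the pair: its last component is the kernel of the
  raising map, and the lowering map walks down from there.\<close>
lemma LR_decomposition_unique:
  fixes X Y :: "'a::field ^ 'n::finite ^ 'n"
  assumes "decomposition Vs" "lowers X Vs" "raises Y Vs"
    and "decomposition Ws" "lowers X Ws" "raises Y Ws"
  shows "Vs = Ws"
proof -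
  interpret V: LR_pair_decomposition Vs X Y
    using assms(1-3) by unfold_locales
  interpret W: LR_pair_decomposition Ws X Y
    using assms(4-6) by unfold_locales
  have "Vs!(CARD('n)-1-k) = Ws!(CARD('n)-1-k)" if "k < CARD('n)" for k
    using that
  proof (induction k)
    case 0
    then show ?case using V.raise_kernel W.raise_kernel by simp
  next
    case (Suc k)
    then have i: "1 \<le> CARD('n)-1-k" "CARD('n)-1-k < CARD('n)" by auto
    have "CARD('n)-1-k-1 = CARD('n)-1-Suc k" by simp
    then show ?case using V.lower_image[OF i] W.lower_image[OF i] Suc by simp
  qed
  then show ?thesis
  proof (intro nth_equalityI)
    fix i assume "i < length Vs"
    then show "Vs!i = Ws!i" using \<open>\<And>k. k < CARD('n) \<Longrightarrow> _\<close>[of "CARD('n)-1-i"] by (simp add: V.length_eq)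
  qed (simp add: V.length_eq W.length_eq)
qed

lemma LR_pair_decomposition_LR_decomp:
  assumes "LR_pair X Y"
  shows "LR_pair_decomposition (LR_decomp X Y) X Y"
proof -
  have "\<exists>!Vs. decomposition Vs \<and> lowers X Vs \<and> raises Y Vs"
    using assms LR_decomposition_unique unfolding LR_pair_def by blast
  then have "decomposition (LR_decomp X Y) \<and> lowers X (LR_decomp X Y) \<and> raises Y (LR_decomp X Y)"
    unfolding LR_decomp_def by (rule theI')
  then show ?thesis by unfold_locales auto
qed

section \<open>Nontrivial LR triples\<close>

locale nontrivial_LR_triple =
  fixes A B C :: "'a::field ^ 'n::finite ^ 'n"
  assumes LR_triple: "LR_triple A B C" and card_ge_2: "2 \<le> CARD('n)"
begin

sublocale V: LR_pair_decomposition "LR_decomp A B" A B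
  using LR_triple LR_pair_decomposition_LR_decomp by (auto simp: LR_triple_def)
sublocale W: LR_pair_decomposition "LR_decomp B C" B C
  using LR_triple LR_pair_decomposition_LR_decomp by (auto simp: LR_triple_def)
sublocale U: LR_pair_decomposition "LR_decomp C A" C A
  using LR_triple LR_pair_decomposition_LR_decomp by (auto simp: LR_triple_def)

lemma idem_centralizers_iff:
  "X \<in> idem_centralizers A B C \<longleftrightarrow>
     (\<forall>i<CARD('n). X ** V.E i = V.E i ** X \<and> X ** W.E i = W.E i ** X \<and> X ** U.E i = U.E i ** X)"
proof -
  have "i \<le> CARD('n) - 1 \<longleftrightarrow> i < CARD('n)" for i using card_ge_2 by auto
  then show ?thesis unfolding idem_centralizers_def by auto
qed

lemma idem_centralizers_lin_comb:
  assumes "X \<in> idem_centralizers A B C" "Y \<in> idem_centralizers A B C"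
  shows "mscale c X + mscale d Y \<in> idem_centralizers A B C"
  using assms unfolding idem_centralizers_iff by (auto intro!: lin_comb_commute)

lemma identity_in_idem_centralizers: "mat 1 \<in> idem_centralizers A B C"
  unfolding idem_centralizers_iff by simp

lemma last_V_eq_first_W: "LR_decomp A B ! (CARD('n)-1) = LR_decomp B C ! 0"
  using V.raise_kernel W.lower_kernel by simp

definition v :: "'a^'n" where
  "v = (SOME v. v \<noteq> 0 \<and> v \<in> LR_decomp A B ! (CARD('n)-1))"

lemma v_nonzero: "v \<noteq> 0"
  and v_in_V: "v \<in> LR_decomp A B ! (CARD('n)-1)"
  and v_in_W: "v \<in> LR_decomp B C ! 0"
proof -
  have "\<exists>v. v \<noteq> 0 \<and> v \<in> LR_decomp A B ! (CARD('n)-1)"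
    using V.component_nonzero[of "CARD('n)-1"] by auto
  from someI_ex[OF this] show "v \<noteq> 0" "v \<in> LR_decomp A B ! (CARD('n)-1)" "v \<in> LR_decomp B C ! 0"
    unfolding v_def last_V_eq_first_W by auto
qed

lemma last_V_component_multiple_v: "u \<in> LR_decomp A B ! (CARD('n)-1) \<Longrightarrow> \<exists>c. u = c *s v"
  using V.component_multiple[OF _ v_in_V v_nonzero] by simp

lemma V_proj_C_v_eq_0:
  assumes "i + 2 < CARD('n)"
  shows "V.E i *v (C *v v) = 0"
proof (rule ccontr)
  assume ne: "V.E i *v (C *v v) \<noteq> 0"
  have "C *v v \<in> LR_decomp B C ! 1" using W.raise_in[of 0, OF _ v_in_W] card_ge_2 by simp
  then have "B *v (C *v v) \<in> LR_decomp A B ! (CARD('n)-1)"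
    using W.lower_in[of 1] card_ge_2 last_V_eq_first_W by simp
  then have "B *v (B *v (C *v v)) = 0" by (rule V.raise_last)
  then have "B *v (B *v (V.E i *v (C *v v))) = 0"
    using V.proj_raise[of "i+1" "B *v (C *v v)"] V.proj_raise[of i "C *v v"] assms by simp
  moreover have "B *v (B *v (V.E i *v (C *v v))) \<noteq> 0"
    using V.raise_nonzero[OF _ V.raise_in] V.raise_nonzero[OF _ V.proj_in ne] V.proj_in assms
    by (metis add_lessD1 add_Suc_right one_add_one Suc_eq_plus1)
  ultimately show False by simp
qed

lemma C_v_expansion: "\<exists>a b. C *v v = a *s v + b *s (A *v v)"
proof -
  have N: "CARD('n)-2 < CARD('n)" "CARD('n)-1 < CARD('n)" "CARD('n)-2 = CARD('n)-1-1"
    using card_ge_2 by auto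
  have "C *v v = (\<Sum>i<CARD('n). V.E i *v (C *v v))" by (rule V.sum_proj)
  also have "\<dots> = (\<Sum>i\<in>{CARD('n)-2, CARD('n)-1}. V.E i *v (C *v v))"
    by (rule sum.mono_neutral_right) (use card_ge_2 in \<open>auto intro!: V_proj_C_v_eq_0\<close>)
  also have "\<dots> = V.E (CARD('n)-2) *v (C *v v) + V.E (CARD('n)-1) *v (C *v v)"
    using card_ge_2 by simp
  finally have Cv: "C *v v = V.E (CARD('n)-2) *v (C *v v) + V.E (CARD('n)-1) *v (C *v v)" .
  obtain a where a: "V.E (CARD('n)-1) *v (C *v v) = a *s v"
    using last_V_component_multiple_v[OF V.proj_in[OF N(2)]] by blast
  have "V.E (CARD('n)-2) *v (C *v v) \<in> (\<lambda>x. A *v x) ` (LR_decomp A B ! (CARD('n)-1))"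
    using V.lower_image[of "CARD('n)-1"] V.proj_in[OF N(1)] card_ge_2 N(3) by simp
  then obtain x where "x \<in> LR_decomp A B ! (CARD('n)-1)" "V.E (CARD('n)-2) *v (C *v v) = A *v x"
    by blast
  moreover obtain b where "x = b *s v" using last_V_component_multiple_v \<open>x \<in> _\<close> by blast
  ultimately have "V.E (CARD('n)-2) *v (C *v v) = b *s (A *v v)" by (simp add: vector_scalar_commute)
  then have "C *v v = a *s v + b *s (A *v v)" using a Cv by (simp add: add.commute)
  then show ?thesis by blast
qed

definition a :: 'a where "a = (SOME a. \<exists>b. C *v v = a *s v + b *s (A *v v))"
definition b :: 'a where "b = (SOME b. C *v v = a *s v + b *s (A *v v))"

lemma C_v: "C *v v = a *s v + b *s (A *v v)"
proof -
  have "\<exists>b. C *v v = a *s v + b *s (A *v v)"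
    unfolding a_def by (rule someI_ex[OF C_v_expansion])
  then show ?thesis unfolding b_def by (rule someI_ex)
qed

lemma trace_C_proj_last: "trace (C ** V.E (CARD('n)-1)) = a"
proof -
  let ?E = "V.E (CARD('n)-1)"
  have N: "CARD('n)-1 < CARD('n)" using card_ge_2 by simp
  have EE: "?E ** ?E = ?E"
    unfolding matrix_eq matrix_vector_mul_assoc[symmetric] using V.proj_idem_on[OF N V.proj_in[OF N]] by blast
  have ECE: "?E ** (C ** ?E) = mscale a ?E"
  proof (simp only: matrix_eq, rule allI)
    fix x
    obtain c where c: "?E *v x = c *s v" using last_V_component_multiple_v[OF V.proj_in[OF N]] by blast
    have "(?E ** (C ** ?E)) *v x = c *s (?E *v (a *s v + b *s (A *v v)))"
      by (simp only: matrix_vector_mul_assoc[symmetric] c vector_scalar_commute C_v)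
    also have "\<dots> = c *s (a *s v)"
      using V.proj_idem_on[OF N v_in_V] V.proj_last_lower[of v]
      by (simp only: matrix_vector_right_distrib vector_scalar_commute) simp
    also have "\<dots> = mscale a ?E *v x" by (simp only: mscale_matrix_vector_mult c vector_smult_assoc mult.commute)
    finally show "(?E ** (C ** ?E)) *v x = mscale a ?E *v x" .
  qed
  have "trace (C ** ?E) = trace ((C ** ?E) ** ?E)" by (simp only: EE flip: matrix_mul_assoc)
  also have "\<dots> = trace (?E ** (C ** ?E))" by (rule trace_mul_sym)
  also have "\<dots> = a * trace ?E" unfolding ECE by (simp add: trace_def mscale_def sum_distrib_left)
  finally show ?thesis using V.trace_proj[OF N] by simp
qed

lemma U_proj_first_v_nonzero: "U.E 0 *v v \<noteq> 0"
proof
  assume "U.E 0 *v v = 0"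
  then obtain w where "v = A *v w" by (rule U.raised_if_proj_first_zero)
  then have "V.E (CARD('n)-1) *v v = 0" using V.proj_last_lower by simp
  then show False using V.proj_idem_on[OF _ v_in_V] v_nonzero card_ge_2 by simp
qed

lemma C_U_proj_v: "k + 1 < CARD('n) \<Longrightarrow> C *v (U.E (k+1) *v v) = a *s (U.E k *v v) + b *s (U.E k *v (A *v v))"
  using U.proj_lower[of k v] by (simp add: C_v matrix_vector_right_distrib vector_scalar_commute)

lemma U_proj_1_v_nonzero: "a \<noteq> 0 \<Longrightarrow> U.E 1 *v v \<noteq> 0"
  using C_U_proj_v[of 0] card_ge_2 U_proj_first_v_nonzero U.proj_first_raise by auto

text \<open>For \<open>a = 0\<close>, \<open>C_U_proj_v\<close> reads \<open>C (U.E (k+1) v) = b A (U.E (k-1) v)\<close> and \<open>C (U.E 1 v) = 0\<close>;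
  since \<open>C\<close> is injective on the (C,A)-components of positive degree, the odd ones vanish.\<close>
lemma U_proj_odd_v_eq_0: assumes "a = 0" "odd j" "j < CARD('n)" shows "U.E j *v v = 0"
  using assms(2,3)
proof (induction j rule: less_induct)
  case (less j)
  obtain k where k: "j = k + 1" using \<open>odd j\<close> by (metis odd_pos Suc_eq_plus1 gr0_implies_Suc)
  have "C *v (U.E j *v v) = b *s (U.E k *v (A *v v))"
    using C_U_proj_v[of k] less.prems k assms(1) by simp
  also have "\<dots> = 0"
  proof (cases k)
    case (Suc i)
    then have "U.E k *v (A *v v) = A *v (U.E i *v v)" using U.proj_raise[of i] less.prems k by simp
    moreover have "U.E i *v v = 0" using less.IH[of i] less.prems k Suc by simp
    ultimately show ?thesis by simp
  qed (simp add: U.proj_first_raise)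
  finally show ?case using U.lower_nonzero[OF _ less.prems(2) U.proj_in[OF less.prems(2)]] k by auto
qed

lemma U_proj_2_v_nonzero: assumes "a = 0" "2 < CARD('n)" shows "U.E 2 *v v \<noteq> 0"
proof -
  have "b \<noteq> 0"
  proof
    assume "b = 0"
    then have "C *v v = 0" using C_v assms(1) by simp
    then show False using W.raise_nonzero[of 0, OF _ v_in_W v_nonzero] card_ge_2 by simp
  qed
  moreover have "A *v (U.E 0 *v v) \<noteq> 0"
    using U.raise_nonzero[of 0, OF _ U.proj_in U_proj_first_v_nonzero] assms(2) by simp
  moreover have "C *v (U.E 2 *v v) = b *s (A *v (U.E 0 *v v))"
    using C_U_proj_v[of 1] U.proj_raise[of 0 v] U_proj_odd_v_eq_0[OF assms(1), of 1] assms(2)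
    by (simp add: numeral_2_eq_2)
  ultimately show ?thesis by auto
qed

lemma V_component_meets_U_components:
  assumes "s < CARD('n) \<Longrightarrow> U.E s *v v \<noteq> 0" "k < CARD('n)"
  shows "\<exists>u\<in>LR_decomp A B ! (CARD('n)-1-k).
           U.E k *v u \<noteq> 0 \<and> (k + s < CARD('n) \<longrightarrow> U.E (k+s) *v u \<noteq> 0)"
  using assms(2)
proof (induction k)
  case 0
  show ?case using v_in_V U_proj_first_v_nonzero assms(1) by (intro bexI[of _ v]) auto
next
  case (Suc k)
  then obtain u where u: "u \<in> LR_decomp A B ! (CARD('n)-1-k)" "U.E k *v u \<noteq> 0"
      "k + s < CARD('n) \<longrightarrow> U.E (k+s) *v u \<noteq> 0" by auto
  have "CARD('n)-1-k-1 = CARD('n)-1-Suc k" by simp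
  then have "A *v u \<in> LR_decomp A B ! (CARD('n)-1-Suc k)"
    using V.lower_in[OF _ _ u(1)] Suc.prems by simp
  moreover have "U.E (j+1) *v (A *v u) \<noteq> 0" if "j + 1 < CARD('n)" "U.E j *v u \<noteq> 0" for j
    using U.proj_raise[OF that(1)] U.raise_nonzero[OF that(1) U.proj_in that(2)] that(1) by simp
  ultimately show ?case using u Suc.prems by (intro bexI[of _ "A *v u"]) auto
qed

lemma idem_centralizer_periodic_scalars:
  assumes X: "X \<in> idem_centralizers A B C" and s: "s < CARD('n) \<Longrightarrow> U.E s *v v \<noteq> 0"
  obtains x where "\<And>i u. i < CARD('n) \<Longrightarrow> u \<in> LR_decomp A B ! i \<Longrightarrow> X *v u = x i *s u"
    and "\<And>i. i + s < CARD('n) \<Longrightarrow> x (i + s) = x i"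
proof -
  obtain x where x: "\<And>i u. i < CARD('n) \<Longrightarrow> u \<in> LR_decomp A B ! i \<Longrightarrow> X *v u = x i *s u"
    using V.commuting_acts_by_scalars X unfolding idem_centralizers_iff by blast
  obtain y where y: "\<And>j u. j < CARD('n) \<Longrightarrow> u \<in> LR_decomp C A ! j \<Longrightarrow> X *v u = y j *s u"
    using U.commuting_acts_by_scalars X unfolding idem_centralizers_iff by blast
  have x_eq_y: "x i = y j"
    if "i < CARD('n)" "j < CARD('n)" "u \<in> LR_decomp A B ! i" "U.E j *v u \<noteq> 0" for i j u
  proof -
    have "y j *s (U.E j *v u) = X *v (U.E j *v u)" using y[OF that(2) U.proj_in[OF that(2)]] by simp
    also have "\<dots> = U.E j *v (X *v u)"
      using X that(2) unfolding idem_centralizers_iff by (simp add: matrix_vector_mul_assoc)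
    also have "\<dots> = x i *s (U.E j *v u)" using x[OF that(1,3)] by (simp add: vector_scalar_commute)
    finally show ?thesis using that(4) by (metis vector_mul_rcancel)
  qed
  have "x (i + s) = x i" if "i + s < CARD('n)" for i
  proof -
    define k where "k = CARD('n) - 1 - (i + s)"
    have k: "CARD('n) - 1 - k = i + s" "CARD('n) - 1 - (k + s) = i" "k + s < CARD('n)"
      using that unfolding k_def by auto
    obtain u where "u \<in> LR_decomp A B ! (i + s)" "U.E (k+s) *v u \<noteq> 0"
      using V_component_meets_U_components[OF s, of k] k by auto
    then have "x (i + s) = y (k + s)" using x_eq_y k(3) that by blast
    moreover obtain u' where "u' \<in> LR_decomp A B ! i" "U.E (k+s) *v u' \<noteq> 0"
      using V_component_meets_U_components[OF s k(3)] k(2) by auto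
    then have "x i = y (k + s)" using x_eq_y k(3) that by simp
    ultimately show ?thesis by simp
  qed
  then show ?thesis using that x by blast
qed

lemma idem_centralizers_eq_scalars:
  assumes "a \<noteq> 0"
  shows "idem_centralizers A B C = range (\<lambda>c. mscale c (mat 1))"
proof (intro equalityI subsetI)
  fix X assume X: "X \<in> idem_centralizers A B C"
  obtain x where x: "\<And>i u. i < CARD('n) \<Longrightarrow> u \<in> LR_decomp A B ! i \<Longrightarrow> X *v u = x i *s u"
    and x_const: "\<And>i. i + 1 < CARD('n) \<Longrightarrow> x (i + 1) = x i"
    using idem_centralizer_periodic_scalars[OF X U_proj_1_v_nonzero[OF assms]] by blast
  have "x i = x 0" if "i < CARD('n)" for i
    using that
  proof (induction i)
    case (Suc i)
    then show ?case using x_const[of i] by simp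
  qed simp
  then have "X = mscale (x 0) (mat 1)"
    by (intro V.matrix_eqI_on_components) (metis x mscale_matrix_vector_mult matrix_vector_mul_lid)
  then show "X \<in> range (\<lambda>c. mscale c (mat 1))" by blast
next
  fix X assume "X \<in> range (\<lambda>c. mscale c (mat 1 :: 'a^'n^'n))"
  moreover have "mscale 0 (mat 1 :: 'a^'n^'n) = 0" by (simp add: mscale_def vec_eq_iff)
  ultimately obtain c where "X = mscale c (mat 1) + mscale 0 (mat 1)" by auto
  then show "X \<in> idem_centralizers A B C"
    using idem_centralizers_lin_comb[OF identity_in_idem_centralizers identity_in_idem_centralizers] by simp
qed

definition J :: "'a^'n^'n" where "J = (\<Sum>j \<le> (CARD('n) - 1) div 2. V.E (2 * j))"

lemma J_on_V: assumes "i < CARD('n)" "u \<in> LR_decomp A B ! i"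
  shows "J *v u = (if even i then u else 0)"
proof -
  have "J *v u = (\<Sum>j \<le> (CARD('n) - 1) div 2. V.E (2 * j) *v u)"
    unfolding J_def by (simp add: matrix_vector_mult_sum_left)
  also have "\<dots> = (\<Sum>j \<le> (CARD('n) - 1) div 2. if j = i div 2 then (if even i then u else 0) else 0)"
  proof (rule sum.cong)
    fix j assume "j \<in> {..(CARD('n) - 1) div 2}"
    then have "2 * j < CARD('n)" using card_ge_2 by auto
    then show "V.E (2 * j) *v u = (if j = i div 2 then (if even i then u else 0) else 0)"
      using V.proj_on_component[OF assms, of "2*j"] by auto
  qed simp
  also have "\<dots> = (if even i then u else 0)"
  proof -
    have "i div 2 \<le> (CARD('n) - 1) div 2" using assms(1) by (simp add: div_le_mono)
    then show ?thesis by (simp add: sum.delta)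
  qed
  finally show ?thesis .
qed

lemma idem_centralizers_in_span_J:
  assumes "a = 0" "X \<in> idem_centralizers A B C"
  shows "\<exists>c d. X = mscale c (mat 1) + mscale d J"
proof -
  have "2 < CARD('n) \<Longrightarrow> U.E 2 *v v \<noteq> 0" by (rule U_proj_2_v_nonzero[OF assms(1)])
  then obtain x where x: "\<And>i u. i < CARD('n) \<Longrightarrow> u \<in> LR_decomp A B ! i \<Longrightarrow> X *v u = x i *s u"
    and x_period: "\<And>i. i + 2 < CARD('n) \<Longrightarrow> x (i + 2) = x i"
    using idem_centralizer_periodic_scalars[OF assms(2)] by blast
  have "x (2 * m + r) = x r" if "2 * m + r < CARD('n)" for m r
    using that
  proof (induction m)
    case (Suc m)
    then show ?case using x_period[of "2 * m + r"] by (simp add: algebra_simps)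
  qed simp
  then have x_parity: "x i = x (i mod 2)" if "i < CARD('n)" for i
    using that by (metis mult_div_mod_eq)
  have "X = mscale (x 1) (mat 1) + mscale (x 0 - x 1) J"
  proof (rule V.matrix_eqI_on_components)
    fix i u assume iu: "i < CARD('n)" "u \<in> LR_decomp A B ! i"
    have "i mod 2 = (if even i then 0 else 1)" by presburger
    then show "X *v u = (mscale (x 1) (mat 1) + mscale (x 0 - x 1) J) *v u"
      using x[OF iu] x_parity[OF iu(1)] J_on_V[OF iu]
      by (simp add: matrix_vector_mult_add_rdistrib mscale_matrix_vector_mult vector_sub_rdistrib
          split: if_splits)
  qed
  then show ?thesis by blast
qed

lemma J_independent:
  assumes "mscale c (mat 1) + mscale d J = 0"
  shows "c = 0 \<and> d = 0"
proof -
  have "(c + d) *s g = 0" if "g \<in> LR_decomp A B ! 0" for g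
    using arg_cong[OF assms, of "\<lambda>M. M *v g"] J_on_V[OF _ that] card_ge_2
    by (simp add: matrix_vector_mult_add_rdistrib mscale_matrix_vector_mult vector_sadd_rdistrib)
  moreover have "c *s g = 0" if "g \<in> LR_decomp A B ! 1" for g
    using arg_cong[OF assms, of "\<lambda>M. M *v g"] J_on_V[OF _ that] card_ge_2
    by (simp add: matrix_vector_mult_add_rdistrib mscale_matrix_vector_mult)
  moreover obtain g0 g1 where "g0 \<in> LR_decomp A B ! 0" "g0 \<noteq> 0" "g1 \<in> LR_decomp A B ! 1" "g1 \<noteq> 0"
    using V.component_nonzero[of 0] V.component_nonzero[of 1] card_ge_2 by auto
  ultimately have "c + d = 0" "c = 0" by (metis vector_mul_eq_0)+
  then show ?thesis by simp
qed

definition parity_space :: "nat \<Rightarrow> ('a^'n) set" where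
  "parity_space e = {u. \<forall>j<CARD('n). odd (j + e) \<longrightarrow> U.E j *v u = 0}"

lemma parity_space_scale: "u \<in> parity_space e \<Longrightarrow> c *s u \<in> parity_space e"
  by (simp add: parity_space_def vector_scalar_commute)

lemma A_maps_parity_space: assumes "u \<in> parity_space e" shows "A *v u \<in> parity_space (Suc e)"
  unfolding parity_space_def
proof (intro CollectI allI impI)
  fix j assume j: "j < CARD('n)" "odd (j + Suc e)"
  show "U.E j *v (A *v u) = 0"
  proof (cases j)
    case (Suc i)
    then show ?thesis using U.proj_raise[of i] assms j unfolding parity_space_def by auto
  qed (simp add: U.proj_first_raise)
qed

lemma C_maps_parity_space: assumes "u \<in> parity_space e" shows "C *v u \<in> parity_space (Suc e)"
  unfolding parity_space_def
proof (intro CollectI allI impI)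
  fix j assume j: "j < CARD('n)" "odd (j + Suc e)"
  show "U.E j *v (C *v u) = 0"
  proof (cases "j + 1 < CARD('n)")
    case True
    then show ?thesis using U.proj_lower[of j] assms j unfolding parity_space_def by auto
  next
    case False
    then have "j = CARD('n) - 1" using j by simp
    then show ?thesis using U.proj_last_lower by simp
  qed
qed

lemma U_component_in_parity_space: "j < CARD('n) \<Longrightarrow> u \<in> LR_decomp C A ! j \<Longrightarrow> u \<in> parity_space j"
  unfolding parity_space_def using U.proj_on_component by auto

lemma v_in_parity_space_0: "a = 0 \<Longrightarrow> v \<in> parity_space 0"
  unfolding parity_space_def using U_proj_odd_v_eq_0 by simp

lemma V_component_in_parity_space:
  assumes "a = 0" "i < CARD('n)" "u \<in> LR_decomp A B ! i"
  shows "u \<in> parity_space (CARD('n) - 1 - i)"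
proof -
  have "LR_decomp A B ! (CARD('n)-1-k) \<subseteq> parity_space k" if "k < CARD('n)" for k
    using that
  proof (induction k)
    case 0
    show ?case using last_V_component_multiple_v parity_space_scale v_in_parity_space_0[OF assms(1)] by auto
  next
    case (Suc k)
    have "1 \<le> CARD('n)-1-k" "CARD('n)-1-k < CARD('n)" "CARD('n)-1-k-1 = CARD('n)-1-Suc k"
      using Suc.prems by auto
    then have "LR_decomp A B ! (CARD('n)-1-Suc k) = (\<lambda>x. A *v x) ` (LR_decomp A B ! (CARD('n)-1-k))"
      using V.lower_image by metis
    then show ?case using Suc A_maps_parity_space by auto
  qed
  from this[of "CARD('n) - 1 - i"] show ?thesis using assms(2,3) by auto
qed

lemma W_component_subset_parity_space:
  assumes "a = 0" "k < CARD('n)"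
  shows "LR_decomp B C ! k \<subseteq> parity_space k"
  using assms(2)
proof (induction k)
  case 0
  then show ?case using V_component_in_parity_space[OF assms(1), of "CARD('n) - 1"] last_V_eq_first_W
    by auto
next
  case (Suc k)
  then have "LR_decomp B C ! (Suc k) = (\<lambda>x. C *v x) ` (LR_decomp B C ! k)"
    using W.raise_image[of k] by simp
  then show ?case using Suc C_maps_parity_space by auto
qed

definition U_parity_proj :: "'a^'n^'n" where
  "U_parity_proj = (\<Sum>j\<in>{j. j < CARD('n) \<and> even (j + (CARD('n) - 1))}. U.E j)"

lemma U_parity_proj_on_parity_space:
  assumes "u \<in> parity_space e"
  shows "U_parity_proj *v u = (if even (e + (CARD('n) - 1)) then u else 0)"
proof -
  let ?S = "{j. j < CARD('n) \<and> even (j + (CARD('n) - 1))}"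
  have zero: "U.E j *v u = 0" if "j < CARD('n)" "odd (j + e)" for j
    using assms that unfolding parity_space_def by auto
  have "U_parity_proj *v u = (\<Sum>j\<in>?S. U.E j *v u)"
    unfolding U_parity_proj_def by (rule matrix_vector_mult_sum_left) simp
  also have "\<dots> = (if even (e + (CARD('n) - 1)) then u else 0)"
  proof (cases "even (e + (CARD('n) - 1))")
    case True
    have "(\<Sum>j\<in>?S. U.E j *v u) = (\<Sum>j<CARD('n). U.E j *v u)"
    proof (rule sum.mono_neutral_left)
      show "\<forall>j\<in>{..<CARD('n)} - ?S. U.E j *v u = 0"
      proof
        fix j assume "j \<in> {..<CARD('n)} - ?S"
        then have "j < CARD('n)" "odd (j + (CARD('n) - 1))" by auto
        moreover have "odd (j + e)" using True \<open>odd (j + (CARD('n) - 1))\<close> by presburger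
        ultimately show "U.E j *v u = 0" using zero by blast
      qed
    qed auto
    then show ?thesis using True U.sum_proj[of u, symmetric] by simp
  next
    case False
    have "(\<Sum>j\<in>?S. U.E j *v u) = 0"
    proof (rule sum.neutral, rule ballI)
      fix j assume "j \<in> ?S"
      then have "j < CARD('n)" "even (j + (CARD('n) - 1))" by auto
      moreover have "odd (j + e)" using False \<open>even (j + (CARD('n) - 1))\<close> by presburger
      ultimately show "U.E j *v u = 0" using zero by blast
    qed
    then show ?thesis using False by simp
  qed
  finally show ?thesis .
qed

lemma J_eq_U_parity_proj: assumes "a = 0" shows "J = U_parity_proj"
proof (rule V.matrix_eqI_on_components)
  fix i u assume iu: "i < CARD('n)" "u \<in> LR_decomp A B ! i"
  have "even (CARD('n) - 1 - i + (CARD('n) - 1)) \<longleftrightarrow> even i" using iu(1) by presburger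
  then show "J *v u = U_parity_proj *v u"
    using J_on_V[OF iu] U_parity_proj_on_parity_space[OF V_component_in_parity_space[OF assms iu]] by simp
qed

lemma J_on_W: assumes "a = 0" "i < CARD('n)" "u \<in> LR_decomp B C ! i"
  shows "J *v u = (if even (i + (CARD('n) - 1)) then u else 0)"
  using J_eq_U_parity_proj[OF assms(1)] U_parity_proj_on_parity_space W_component_subset_parity_space[OF assms(1,2)] assms(3)
  by auto

lemma J_on_U: assumes "a = 0" "i < CARD('n)" "u \<in> LR_decomp C A ! i"
  shows "J *v u = (if even (i + (CARD('n) - 1)) then u else 0)"
  using J_eq_U_parity_proj[OF assms(1)] U_parity_proj_on_parity_space U_component_in_parity_space[OF assms(2,3)] by auto

lemma J_in_idem_centralizers: assumes "a = 0" shows "J \<in> idem_centralizers A B C"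
  unfolding idem_centralizers_iff
proof (intro allI impI conjI)
  fix i assume i: "i < CARD('n)"
  show "J ** V.E i = V.E i ** J" using V.diagonal_mult_proj[OF J_on_V i] by simp
  show "J ** W.E i = W.E i ** J" using W.diagonal_mult_proj[OF J_on_W[OF assms] i] by simp
  show "J ** U.E i = U.E i ** J" using U.diagonal_mult_proj[OF J_on_U[OF assms] i] by simp
qed

lemma bipartite_if_a_eq_0: assumes "a = 0" shows "bipartite A B C"
  unfolding bipartite_def
proof (intro allI impI conjI)
  have A: "A ** J = (mat 1 - J) ** A" and B: "B ** J = (mat 1 - J) ** B"
    using V.swaps_alternating_idempotent[OF J_on_V] by auto
  have C: "C ** J = (mat 1 - J) ** C"
    using U.swaps_alternating_idempotent[OF J_on_U[OF assms]] by auto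
  fix i assume "i \<le> CARD('n) - 1"
  then have i: "i < CARD('n)" using card_ge_2 by simp
  show "trace (C ** V.E i) = 0"
    using trace_mult_eq_0_if_swaps[OF C] V.diagonal_mult_proj[OF J_on_V i] by auto
  show "trace (A ** W.E i) = 0"
    using trace_mult_eq_0_if_swaps[OF A] W.diagonal_mult_proj[OF J_on_W[OF assms] i] by auto
  show "trace (B ** U.E i) = 0"
    using trace_mult_eq_0_if_swaps[OF B] U.diagonal_mult_proj[OF J_on_U[OF assms] i] by auto
qed

lemma bipartite_iff: "bipartite A B C \<longleftrightarrow> a = 0"
  using bipartite_if_a_eq_0 trace_C_proj_last card_ge_2 unfolding bipartite_def by auto

lemma idem_centralizers_eq_span_J:
  assumes "a = 0"
  shows "idem_centralizers A B C = {mscale c (mat 1) + mscale d J | c d. True}"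
  using idem_centralizers_in_span_J[OF assms]
    idem_centralizers_lin_comb[OF identity_in_idem_centralizers J_in_idem_centralizers[OF assms]]
  by blast

end

theorem proposition19p5:
  fixes A B C :: "'a::field ^ 'n::finite ^ 'n"
  assumes "LR_triple A B C"
  shows "(CARD('n) - 1 = 0 \<longrightarrow> is_basis_of [mat 1] (idem_centralizers A B C))
       \<and> (\<not> bipartite A B C \<longrightarrow> is_basis_of [mat 1] (idem_centralizers A B C))
       \<and> (bipartite A B C \<and> CARD('n) - 1 \<noteq> 0 \<longrightarrow>
            is_basis_of [mat 1, (\<Sum>j \<le> (CARD('n) - 1) div 2. proj (LR_decomp A B) (2 * j))]
                        (idem_centralizers A B C))"
proof (cases "CARD('n) - 1 = 0")
  case True
  then have "CARD('n) = 1" using zero_less_card_finite[where 'a='n] by linarith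
  then show ?thesis using True idem_centralizers_card_1 is_basis_of_scalars by metis
next
  case False
  interpret nontrivial_LR_triple A B C
    using assms False by unfold_locales auto
  show ?thesis
  proof (cases "a = 0")
    case True
    then show ?thesis using False bipartite_iff idem_centralizers_eq_span_J J_independent
      by (auto simp: J_def intro!: is_basis_of_pair)
  next
    case False
    then show ?thesis using bipartite_iff idem_centralizers_eq_scalars is_basis_of_scalars by auto
  qed
qed

end
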